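(* Let $\mathbf K$ be the linearly ordered set obtained from the lexicographic product $\mathbb N\ltimes\mathbb N$ (elements $m\ltimes n$ with $m,n\in\mathbb N$, ordered by $m\ltimes n< m'\ltimes n'$ iff $m<m'$, or $m=m'$ and $n<n'$) by adding a top element $\omega^2$, regarded as a complete lattice, and let $\mathbf L=\mathbf K\times\{0,1\}$ be the product lattice (componentwise order, $0<1$). Then in the complete lattice $\mathbf L$ the element $(\omega^2,0)$ is a relative generator, but $(\omega^2,0)$ belongs to the complete sublattice generated by the set $\Gamma$ of all non-generators of $\mathbf L$. In particular, $\Gamma$ is not a complete sublattice of $\mathbf L$.
   Context: A complete lattice is a partially ordered set in which every subset (including the empty set) has a meet and a join. A complete sublattice of a complete lattice $\mathbf L$ is a subset $T\subseteq L$ closed under arbitrary meets and joins computed in $L$, including those of the empty set (so $T$ contains the minimum and maximum of $L$). For $X\subseteq L$, $\langle X\rangle$ (the complete sublattice generated by $X$) is the intersection of all complete sublattices containing $X$, and $\langle X,a\rangle=\langle X\cup\{a\}\rangle$. An element $a$ is a non-generator if for every $X\subseteq L$, $\langle X,a\rangle=L$ implies $\langle X\rangle=L$; otherwise $a$ is a relative generator. *)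

theory Defs
  imports Main
begin

text \<open>The ambient complete lattice is the whole type, ordered by the relation le.
  Meets and joins are greatest lower / least upper bounds with respect to le.\<close>

definition is_lub :: "('a \<Rightarrow> 'a \<Rightarrow> bool) \<Rightarrow> 'a set \<Rightarrow> 'a \<Rightarrow> bool" where
  "is_lub le A x \<longleftrightarrow> (\<forall>a\<in>A. le a x) \<and> (\<forall>y. (\<forall>a\<in>A. le a y) \<longrightarrow> le x y)"

definition is_glb :: "('a \<Rightarrow> 'a \<Rightarrow> bool) \<Rightarrow> 'a set \<Rightarrow> 'a \<Rightarrow> bool" where
  "is_glb le A x \<longleftrightarrow> (\<forall>a\<in>A. le x a) \<and> (\<forall>y. (\<forall>a\<in>A. le y a) \<longrightarrow> le y x)"

text \<open>Closed under arbitrary joins and meets (including those of the empty set).\<close>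
definition complete_sublattice :: "('a \<Rightarrow> 'a \<Rightarrow> bool) \<Rightarrow> 'a set \<Rightarrow> bool" where
  "complete_sublattice le T \<longleftrightarrow>
     (\<forall>A x. A \<subseteq> T \<longrightarrow> is_lub le A x \<longrightarrow> x \<in> T) \<and>
     (\<forall>A x. A \<subseteq> T \<longrightarrow> is_glb le A x \<longrightarrow> x \<in> T)"

definition generated :: "('a \<Rightarrow> 'a \<Rightarrow> bool) \<Rightarrow> 'a set \<Rightarrow> 'a set" where
  "generated le X = \<Inter> {T. complete_sublattice le T \<and> X \<subseteq> T}"

definition non_generator :: "('a \<Rightarrow> 'a \<Rightarrow> bool) \<Rightarrow> 'a \<Rightarrow> bool" where
  "non_generator le a \<longleftrightarrow>
     (\<forall>X. generated le (insert a X) = UNIV \<longrightarrow> generated le X = UNIV)"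

definition relative_generator :: "('a \<Rightarrow> 'a \<Rightarrow> bool) \<Rightarrow> 'a \<Rightarrow> bool" where
  "relative_generator le a \<longleftrightarrow> \<not> non_generator le a"

text \<open>K = (N lex N) plus a top element omega^2.  Pt m n stands for m \<ltimes> n.\<close>
datatype kel = Pt nat nat | Omega2

fun kle :: "kel \<Rightarrow> kel \<Rightarrow> bool" where
  "kle (Pt m n) (Pt m' n') \<longleftrightarrow> m < m' \<or> (m = m' \<and> n \<le> n')"
| "kle _ Omega2 \<longleftrightarrow> True"
| "kle Omega2 (Pt _ _) \<longleftrightarrow> False"

text \<open>L = K \<times> {0,1}, componentwise order; False = 0, True = 1.\<close>
definition lle :: "kel \<times> bool \<Rightarrow> kel \<times> bool \<Rightarrow> bool" where
  "lle p q \<longleftrightarrow> kle (fst p) (fst q) \<and> (snd p \<longrightarrow> snd q)"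

end

theory Submission
  imports Defs
begin

text \<open>The element \<open>(\<omega>^2, 0)\<close> is a relative generator: the meets \<open>(k, 0) = (k, 1) \<sqinter> (\<omega>^2, 0)\<close>
  show that it generates \<open>L\<close> together with \<open>K \<times> {1}\<close>, whereas \<open>K \<times> {1}\<close> alone lies in the
  proper complete sublattice \<open>K \<times> {1} \<union> \<down>(0\<ltimes>0) \<times> {0}\<close>.

  Each \<open>a = ((m+1)\<ltimes>0, 0)\<close> is a non-generator.  A complete sublattice \<open>T\<close> missing \<open>a\<close> contains
  only finitely many \<open>(m\<ltimes>n, 0)\<close>, since their join is \<open>a\<close>.  If \<open>(\<omega>^2, 0) \<in> T\<close>, closure under
  meets with it shows that no element of \<open>T\<close> has first coordinate \<open>c = m\<ltimes>(N+1)\<close> for large \<open>N\<close>;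
  as \<open>c\<close> has an immediate predecessor and successor in \<open>K\<close>, the elements avoiding \<open>c\<close> form a proper
  complete sublattice containing \<open>T\<close> and \<open>a\<close>.  If \<open>(\<omega>^2, 0) \<notin> T\<close>, the first coordinates of the
  \<open>(k, 0) \<in> T\<close> are bounded by some \<open>g\<ltimes>0\<close>, and \<open>K \<times> {1} \<union> \<down>(g\<ltimes>0) \<times> {0}\<close> does the job.

  Since \<open>(\<omega>^2, 0)\<close> is the join of the non-generators \<open>((m+1)\<ltimes>0, 0)\<close>, the non-generators
  do not form a complete sublattice.\<close>

lemma complete_sublattice_lub:
  "complete_sublattice le T \<Longrightarrow> A \<subseteq> T \<Longrightarrow> is_lub le A x \<Longrightarrow> x \<in> T"
  unfolding complete_sublattice_def by blast

lemma complete_sublattice_glb: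
  "complete_sublattice le T \<Longrightarrow> A \<subseteq> T \<Longrightarrow> is_glb le A x \<Longrightarrow> x \<in> T"
  unfolding complete_sublattice_def by blast

lemma subset_generated: "X \<subseteq> generated le X"
  unfolding generated_def by blast

lemma generated_minimal: "complete_sublattice le T \<Longrightarrow> X \<subseteq> T \<Longrightarrow> generated le X \<subseteq> T"
  unfolding generated_def by blast

lemma complete_sublattice_generated: "complete_sublattice le (generated le X)"
proof -
  have "x \<in> generated le X" if "A \<subseteq> generated le X" "is_lub le A x \<or> is_glb le A x" for A x
    unfolding generated_def
  proof (rule InterI)
    fix T assume "T \<in> {T. complete_sublattice le T \<and> X \<subseteq> T}"
    then have T: "complete_sublattice le T" "X \<subseteq> T" by simp_all
    then have "A \<subseteq> T" using that(1) generated_minimal by blast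
    then show "x \<in> T" using that(2) T(1) complete_sublattice_lub complete_sublattice_glb by metis
  qed
  then show ?thesis unfolding complete_sublattice_def by metis
qed

lemma generated_eq: "complete_sublattice le T \<Longrightarrow> generated le T = T"
  by (simp add: generated_minimal subset_antisym subset_generated)

lemma non_generatorI:
  assumes "\<And>T. complete_sublattice le T \<Longrightarrow> a \<notin> T \<Longrightarrow>
             \<exists>S. complete_sublattice le S \<and> insert a T \<subseteq> S \<and> S \<noteq> UNIV"
  shows "non_generator le a"
  unfolding non_generator_def
proof (intro allI impI)
  fix X
  let ?T = "generated le X"
  assume full: "generated le (insert a X) = UNIV"
  have "a \<in> ?T"
  proof (rule ccontr)
    assume "a \<notin> ?T"
    with assms[OF complete_sublattice_generated] obtain S
      where S: "complete_sublattice le S" "insert a ?T \<subseteq> S" "S \<noteq> UNIV"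
      by blast
    have "insert a X \<subseteq> S" using S(2) subset_generated[of X le] by blast
    then have "generated le (insert a X) \<subseteq> S" by (rule generated_minimal[OF S(1)])
    with full S(3) show False by blast
  qed
  then have "insert a X \<subseteq> ?T" using subset_generated[of X le] by blast
  then have "generated le (insert a X) \<subseteq> ?T"
    by (rule generated_minimal[OF complete_sublattice_generated])
  then show "?T = UNIV" using full by blast
qed

lemma kle_trans: "kle x y \<Longrightarrow> kle y z \<Longrightarrow> kle x z"
  by (cases x; cases y; cases z) auto

lemma is_glb_True_Omega2: "is_glb lle {(k, True), (Omega2, False)} (k, False)"
  unfolding is_glb_def lle_def by (cases k) auto

lemma is_lub_unbounded_row:
  assumes "A \<subseteq> {(Pt m n, False) | n. True}" and "\<forall>k. \<exists>n\<ge>k. (Pt m n, False) \<in> A"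
  shows "is_lub lle A (Pt (Suc m) 0, False)"
  unfolding is_lub_def
proof (intro conjI allI impI ballI)
  fix p assume "p \<in> A"
  then show "lle p (Pt (Suc m) 0, False)" using assms(1) unfolding lle_def by auto
next
  fix y assume upper: "\<forall>p\<in>A. lle p y"
  show "lle (Pt (Suc m) 0, False) y"
  proof (cases "fst y")
    case (Pt m' k)
    obtain n where "n > k" "(Pt m n, False) \<in> A" using assms(2) by (meson Suc_le_eq)
    then show ?thesis using upper Pt unfolding lle_def by fastforce
  qed (simp add: lle_def)
qed

lemma is_lub_unbounded_columns:
  assumes "A \<subseteq> {p. \<not> snd p}" and "\<forall>k. \<exists>m n. m > k \<and> (Pt m n, False) \<in> A"
  shows "is_lub lle A (Omega2, False)"
  unfolding is_lub_def
proof (intro conjI allI impI ballI)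
  fix p assume "p \<in> A"
  then show "lle p (Omega2, False)" using assms(1) unfolding lle_def by (cases "fst p") auto
next
  fix y assume upper: "\<forall>p\<in>A. lle p y"
  show "lle (Omega2, False) y"
  proof (cases "fst y")
    case (Pt k n')
    obtain m n where "m > k" "(Pt m n, False) \<in> A" using assms(2) by blast
    then show ?thesis using upper Pt unfolding lle_def by fastforce
  qed (simp add: lle_def)
qed

lemma complete_sublattice_upper_or_below:
  "complete_sublattice lle {p. snd p \<or> kle (fst p) g}" (is "complete_sublattice lle ?S")
  unfolding complete_sublattice_def
proof (intro conjI allI impI)
  fix A x assume A: "A \<subseteq> ?S" and lub: "is_lub lle A x"
  show "x \<in> ?S"
  proof (cases "\<exists>a\<in>A. snd a")
    case True
    then show ?thesis using lub unfolding is_lub_def lle_def by auto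
  next
    case False
    then have "\<forall>a\<in>A. lle a (g, False)" using A unfolding lle_def by auto
    then have "lle x (g, False)" using lub unfolding is_lub_def by blast
    then show ?thesis unfolding lle_def by simp
  qed
next
  fix A x assume A: "A \<subseteq> ?S" and glb: "is_glb lle A x"
  show "x \<in> ?S"
  proof (cases "\<exists>a\<in>A. \<not> snd a")
    case True
    then obtain a where a: "a \<in> A" "\<not> snd a" by blast
    then have "kle (fst a) g" using A by auto
    moreover have "kle (fst x) (fst a)" using a glb unfolding is_glb_def lle_def by blast
    ultimately show ?thesis using kle_trans by auto
  next
    case False
    have "\<forall>a\<in>A. lle (fst x, True) a"
    proof
      fix a assume "a \<in> A"
      then have "lle x a" "snd a" using glb False unfolding is_glb_def by auto
      then show "lle (fst x, True) a" unfolding lle_def by simp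
    qed
    then have "lle (fst x, True) x" using glb unfolding is_glb_def by blast
    then show ?thesis unfolding lle_def by simp
  qed
qed

lemma complete_sublattice_fst_neq_Pt_Suc:
  "complete_sublattice lle {p. fst p \<noteq> Pt m (Suc n)}" (is "complete_sublattice lle ?S")
  unfolding complete_sublattice_def
proof (intro conjI allI impI)
  fix A x assume A: "A \<subseteq> ?S" and lub: "is_lub lle A x"
  show "x \<in> ?S"
  proof (rule ccontr)
    assume "x \<notin> ?S"
    then have x: "fst x = Pt m (Suc n)" by simp
    have pred: "kle k (Pt m (Suc n)) \<Longrightarrow> k \<noteq> Pt m (Suc n) \<Longrightarrow> kle k (Pt m n)" for k
      by (cases k) auto
    have "\<forall>a\<in>A. lle a (Pt m n, snd x)"
    proof
      fix a assume "a \<in> A"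
      then have "lle a x" "fst a \<noteq> Pt m (Suc n)" using lub A unfolding is_lub_def by auto
      then show "lle a (Pt m n, snd x)" using pred x unfolding lle_def by auto
    qed
    then have "lle x (Pt m n, snd x)" using lub unfolding is_lub_def by blast
    then show False using x unfolding lle_def by simp
  qed
next
  fix A x assume A: "A \<subseteq> ?S" and glb: "is_glb lle A x"
  show "x \<in> ?S"
  proof (rule ccontr)
    assume "x \<notin> ?S"
    then have x: "fst x = Pt m (Suc n)" by simp
    have succ: "kle (Pt m (Suc n)) k \<Longrightarrow> k \<noteq> Pt m (Suc n) \<Longrightarrow> kle (Pt m (Suc (Suc n))) k" for k
      by (cases k) auto
    have "\<forall>a\<in>A. lle (Pt m (Suc (Suc n)), snd x) a"
    proof
      fix a assume "a \<in> A"
      then have "lle x a" "fst a \<noteq> Pt m (Suc n)" using glb A unfolding is_glb_def by auto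
      then show "lle (Pt m (Suc (Suc n)), snd x) a" using succ x unfolding lle_def by auto
    qed
    then have "lle (Pt m (Suc (Suc n)), snd x) x" using glb unfolding is_glb_def by blast
    then show False using x unfolding lle_def by simp
  qed
qed

lemma relative_generator_Omega2_False: "relative_generator lle (Omega2, False)"
  unfolding relative_generator_def non_generator_def
proof
  let ?X = "range (\<lambda>k. (k, True))"
  let ?G = "generated lle (insert (Omega2, False) ?X)"
  assume non_gen: "\<forall>X. generated lle (insert (Omega2, False) X) = UNIV \<longrightarrow> generated lle X = UNIV"
  have "p \<in> ?G" for p
  proof (cases p)
    case (Pair k b)
    have gens: "insert (Omega2, False) ?X \<subseteq> ?G" by (rule subset_generated)
    then have "{(k, True), (Omega2, False)} \<subseteq> ?G" by auto
    then have "(k, False) \<in> ?G"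
      by (rule complete_sublattice_glb[OF complete_sublattice_generated _ is_glb_True_Omega2])
    moreover have "(k, True) \<in> ?G" using gens by auto
    ultimately show ?thesis using Pair by (cases b) simp_all
  qed
  then have "generated lle ?X = UNIV" using non_gen by blast
  moreover have "generated lle ?X \<subseteq> {p. snd p \<or> kle (fst p) (Pt 0 0)}"
    by (rule generated_minimal[OF complete_sublattice_upper_or_below]) auto
  ultimately have "(Omega2, False) \<in> {p. snd p \<or> kle (fst p) (Pt 0 0)}" by blast
  then show False by simp
qed

lemma bottom_row_eventually_outside:
  assumes "complete_sublattice lle T" and "(Pt (Suc m) 0, False) \<notin> T"
  shows "\<exists>N. \<forall>n\<ge>N. (Pt m n, False) \<notin> T"
proof (rule ccontr)
  let ?A = "T \<inter> {(Pt m n, False) | n. True}"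
  assume "\<not> ?thesis"
  then have "\<forall>k. \<exists>n\<ge>k. (Pt m n, False) \<in> T" by blast
  then have "is_lub lle ?A (Pt (Suc m) 0, False)"
    by (intro is_lub_unbounded_row) blast+
  from complete_sublattice_lub[OF assms(1) Int_lower1 this] assms(2) show False by blast
qed

lemma bottom_layer_bounded:
  assumes "complete_sublattice lle T" and "(Omega2, False) \<notin> T"
  shows "\<exists>g. \<forall>m n. (Pt m n, False) \<in> T \<longrightarrow> m < g"
proof (rule ccontr)
  let ?A = "T \<inter> {p. \<not> snd p}"
  assume "\<not> ?thesis"
  then have "\<forall>k. \<exists>m n. m > k \<and> (Pt m n, False) \<in> T" by (meson not_le le_imp_less_Suc)
  then have "is_lub lle ?A (Omega2, False)"
    by (intro is_lub_unbounded_columns) auto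
  from complete_sublattice_lub[OF assms(1) Int_lower1 this] assms(2) show False by blast
qed

lemma non_generator_Pt_Suc_0_False: "non_generator lle (Pt (Suc m) 0, False)"
proof (rule non_generatorI)
  fix T
  let ?a = "(Pt (Suc m) 0, False)"
  assume T: "complete_sublattice lle T" and "?a \<notin> T"
  then obtain N where N: "\<forall>n\<ge>N. (Pt m n, False) \<notin> T"
    using bottom_row_eventually_outside by blast
  show "\<exists>S. complete_sublattice lle S \<and> insert ?a T \<subseteq> S \<and> S \<noteq> UNIV"
  proof (cases "(Omega2, False) \<in> T")
    case True
    let ?c = "Pt m (Suc N)"
    have "(?c, True) \<notin> T"
    proof
      assume "(?c, True) \<in> T"
      with True have "{(?c, True), (Omega2, False)} \<subseteq> T" by simp
      from complete_sublattice_glb[OF T this is_glb_True_Omega2] N show False by simp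
    qed
    moreover have "(?c, False) \<notin> T" using N by simp
    ultimately have "(?c, b) \<notin> T" for b by (cases b) simp_all
    then have "insert ?a T \<subseteq> {p. fst p \<noteq> ?c}" by auto
    moreover have "(?c, False) \<notin> {p. fst p \<noteq> ?c}" by simp
    ultimately show ?thesis using complete_sublattice_fst_neq_Pt_Suc by blast
  next
    case False
    with T obtain g where g: "\<forall>m n. (Pt m n, False) \<in> T \<longrightarrow> m < g"
      using bottom_layer_bounded by blast
    let ?S = "{p. snd p \<or> kle (fst p) (Pt (max g (Suc m)) 0)}"
    have "p \<in> ?S" if "p \<in> insert ?a T" for p
    proof (cases p)
      case (Pair k b)
      then show ?thesis using that g[rule_format] False by (cases k; cases b) fastforce+
    qed
    moreover have "(Omega2, False) \<notin> ?S" by simp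
    ultimately show ?thesis using complete_sublattice_upper_or_below by blast
  qed
qed

lemma Omega2_False_generated_by_non_generators:
  "(Omega2, False) \<in> generated lle {a. non_generator lle a}"
proof -
  let ?A = "range (\<lambda>m. (Pt (Suc m) 0, False))"
  have "?A \<subseteq> {a. non_generator lle a}" using non_generator_Pt_Suc_0_False by blast
  also have "\<dots> \<subseteq> generated lle {a. non_generator lle a}" by (rule subset_generated)
  finally have "?A \<subseteq> generated lle {a. non_generator lle a}" .
  moreover have "is_lub lle ?A (Omega2, False)"
    by (rule is_lub_unbounded_columns) (auto intro: lessI)
  ultimately show ?thesis by (rule complete_sublattice_lub[OF complete_sublattice_generated])
qed

theorem theorem4:
  shows "relative_generator lle (Omega2, False)
       \<and> (Omega2, False) \<in> generated lle {a. non_generator lle a}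
       \<and> \<not> complete_sublattice lle {a. non_generator lle a}"
proof (intro conjI notI)
  show "relative_generator lle (Omega2, False)" by (rule relative_generator_Omega2_False)
  show "(Omega2, False) \<in> generated lle {a. non_generator lle a}"
    by (rule Omega2_False_generated_by_non_generators)
  assume "complete_sublattice lle {a. non_generator lle a}"
  then have "(Omega2, False) \<in> {a. non_generator lle a}"
    using Omega2_False_generated_by_non_generators generated_eq by blast
  with relative_generator_Omega2_False show False unfolding relative_generator_def by simp
qed

end
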